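(* Let $k\ge 2$ and $n\ge 1$ be integers and let $1\le M\le kn-1$. Then the probability of selecting an item of highest rank (rank $n$) using the strategy $\mathcal{S}(n,k;M)$ is \[ P_{n,k}(\mathcal{S}(n,k;M))=\sum_{l=1}^{k-1}\frac{\binom Ml(k)_l\,(k(n-1))_{M-l}}{(kn)_M} +k\sum_{j=1}^{n-1}\sum_{l=1}^k \frac{\binom Ml(k)_l\,(k(j-1))_{M-l}}{(kn)_M}\cdot\frac 1{k(n-j+1)-l}. \]
   Context: Fix integers $k\ge2$, $n\ge1$. There are $kn$ items, $k$ items at each of the ranks $1,2,\dots,n$ (rank $n$ is highest). The items are revealed one at a time in a uniformly random order, i.e. the sequence of ranks is a uniformly random permutation of the multiset $\{1^k,2^k,\dots,n^k\}$ (each number in $\{1,\dots,n\}$ repeated $k$ times); $P_{n,k}$ denotes this uniform probability. For $M\in\{1,\dots,kn-1\}$, the strategy $\mathcal{S}(n,k;M)$ lets the first $M$ items pass and then selects the first later-arriving item whose rank is greater than or equal to the highest rank among the first $M$ items (if such an item exists; otherwise nothing is selected). $P_{n,k}(\mathcal{S}(n,k;M))$ denotes the probability that this strategy selects an item of rank $n$. Notation: $(b)_a=b(b-1)\cdots(b-a+1)$ is the falling factorial for nonnegative integers $a,b$, with $(b)_0=1$ (so $(b)_a=0$ if $a>b$). *)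

theory Defs
  imports Complex_Main "HOL-Combinatorics.Multiset_Permutations"
begin

definition rank_mset :: "nat \<Rightarrow> nat \<Rightarrow> nat multiset" where
  "rank_mset n k = (\<Sum>r\<in>{1..n}. replicate_mset k r)"

definition arrangements :: "nat \<Rightarrow> nat \<Rightarrow> nat list set" where
  "arrangements n k = permutations_of_multiset (rank_mset n k)"

definition strategy_succeeds :: "nat \<Rightarrow> nat \<Rightarrow> nat list \<Rightarrow> bool" where
  "strategy_succeeds n M xs =
     (case find (\<lambda>x. Max (set (take M xs)) \<le> x) (drop M xs) of
        None \<Rightarrow> False
      | Some x \<Rightarrow> x = n)"

definition success_prob :: "nat \<Rightarrow> nat \<Rightarrow> nat \<Rightarrow> real" where
  "success_prob n k M =
     real (card {xs \<in> arrangements n k. strategy_succeeds n M xs}) / real (card (arrangements n k))"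

text \<open>Falling factorial (b)_a = b(b-1)...(b-a+1); equals 0 if a > b.\<close>
definition ffall :: "nat \<Rightarrow> nat \<Rightarrow> nat" where
  "ffall b a = (\<Prod>i<a. b - i)"

end

theory Submission
  imports Defs
begin

text \<open>
  Split success according to the maximum \<open>j\<close> of the first \<open>M\<close> items and the number \<open>l\<close> of
  its copies among them. That the first \<open>M\<close> items consist of exactly \<open>l\<close> copies of \<open>j\<close> and
  \<open>M - l\<close> items of lower rank is a hypergeometric event. Given such a prefix, the remaining
  items form a uniformly random arrangement of what is left, and the strategy succeeds iff the
  first of them of rank \<open>\<ge> j\<close> has rank \<open>n\<close>; that first item is uniformly distributed
  among the remaining items of rank \<open>\<ge> j\<close>. Both facts are proved by conditioning on the
  first item of a random arrangement.
\<close>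

definition perm_prob :: "'a multiset \<Rightarrow> ('a list \<Rightarrow> bool) \<Rightarrow> real" where
  "perm_prob A P =
     real (card {xs \<in> permutations_of_multiset A. P xs}) / real (card (permutations_of_multiset A))"

lemma perm_prob_False [simp]: "perm_prob A (\<lambda>_. False) = 0"
  by (simp add: perm_prob_def)

lemma perm_prob_True [simp]: "perm_prob A (\<lambda>_. True) = 1"
  by (simp add: perm_prob_def card_gt_0_iff)

lemma perm_prob_eq_sum:
  "perm_prob A P =
     (\<Sum>xs\<in>permutations_of_multiset A. of_bool (P xs)) / real (card (permutations_of_multiset A))"
  unfolding perm_prob_def of_bool_def
  by (subst sum.inter_filter[symmetric]) simp_all

lemma perm_prob_partition:
  assumes "finite I"
    and "\<And>xs. xs \<in> permutations_of_multiset A \<Longrightarrow>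
           of_bool (P xs) = (\<Sum>i\<in>I. of_bool (Q i xs) :: real)"
  shows "perm_prob A P = (\<Sum>i\<in>I. perm_prob A (Q i))"
  unfolding perm_prob_eq_sum sum_divide_distrib[symmetric]
  by (simp add: assms(2) sum.swap[of _ I] cong: sum.cong)

lemma sum_mset_eq_sum_count:
  "(\<Sum>x\<in>#A. f x) = (\<Sum>x\<in>set_mset A. of_nat (count A x) * f x)"
proof (induction A)
  case empty
  then show ?case by simp
next
  case (add x A)
  have "(\<Sum>y\<in>set_mset (add_mset x A). of_nat (count (add_mset x A) y) * f y)
      = (\<Sum>y\<in>insert x (set_mset A). of_nat (count A y) * f y + (if y = x then f y else 0))"
    by (intro sum.cong) (auto simp: algebra_simps)
  also have "\<dots> = (\<Sum>y\<in>insert x (set_mset A). of_nat (count A y) * f y) + f x"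
    by (simp add: sum.distrib)
  also have "(\<Sum>y\<in>insert x (set_mset A). of_nat (count A y) * f y)
      = (\<Sum>y\<in>set_mset A. of_nat (count A y) * f y)"
    by (rule sum.mono_neutral_right) (auto simp: not_in_iff)
  finally show ?case using add by (simp add: add.commute)
qed

lemma sum_mset_if_const:
  "(\<Sum>x\<in>#A. if P x then c else 0) = of_nat (size (filter_mset P A)) * c"
  by (induction A) (auto simp: algebra_simps)

lemma perm_prob_Cons:
  assumes "A \<noteq> {#}"
  shows "perm_prob A P = (\<Sum>x\<in>#A. perm_prob (A - {#x#}) (\<lambda>ys. P (x # ys))) / real (size A)"
proof -
  define C where "C B = real (card (permutations_of_multiset B))" for B :: "'a multiset"
  have split: "{xs \<in> permutations_of_multiset A. P xs} =
      (\<Union>x\<in>set_mset A. (#) x ` {ys \<in> permutations_of_multiset (A - {#x#}). P (x # ys)})"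
    by (subst permutations_of_multiset_nonempty[OF assms]) auto
  have "card {xs \<in> permutations_of_multiset A. P xs} =
      (\<Sum>x\<in>set_mset A. card {ys \<in> permutations_of_multiset (A - {#x#}). P (x # ys)})"
    unfolding split by (subst card_UN_disjoint) (auto simp: card_image)
  then have "perm_prob A P =
      (\<Sum>x\<in>set_mset A. real (card {ys \<in> permutations_of_multiset (A - {#x#}). P (x # ys)})) / C A"
    by (simp add: perm_prob_def C_def)
  also have "\<dots> = (\<Sum>x\<in>set_mset A. real (count A x) * perm_prob (A - {#x#}) (\<lambda>ys. P (x # ys)))
      / real (size A)"
    unfolding sum_divide_distrib
  proof (rule sum.cong)
    fix x assume "x \<in># A"
    then have "C A * real (count A x) = real (size A) * C (A - {#x#})"
      unfolding C_def by (metis card_permutations_of_multiset_remove_aux of_nat_mult)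
    moreover have "C A > 0" "C (A - {#x#}) > 0" "real (size A) > 0"
      using assms by (simp_all add: C_def card_gt_0_iff nonempty_has_size)
    ultimately have ratio: "real (count A x) / real (size A) = C (A - {#x#}) / C A"
      using assms by (simp add: field_simps)
    define K where "K = real (card {ys \<in> permutations_of_multiset (A - {#x#}). P (x # ys)})"
    have "real (count A x) * perm_prob (A - {#x#}) (\<lambda>ys. P (x # ys)) / real (size A)
        = K * (real (count A x) / real (size A)) / C (A - {#x#})"
      by (simp add: perm_prob_def C_def K_def ac_simps)
    also have "\<dots> = K / C A"
      using ratio \<open>C (A - {#x#}) > 0\<close> by simp
    finally show "K / C A =
        real (count A x) * perm_prob (A - {#x#}) (\<lambda>ys. P (x # ys)) / real (size A)"
      by simp
  qed simp
  finally show ?thesis by (simp only: sum_mset_eq_sum_count)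
qed

lemma perm_prob_find_eq_Some:
  assumes "P y"
  shows "perm_prob A (\<lambda>xs. find P xs = Some y) = real (count A y) / real (size (filter_mset P A))"
proof (induction A rule: multiset_remove_induct)
  case empty
  then show ?case by (simp add: perm_prob_def)
next
  case (remove A)
  define d s b where "d = real (count A y)" and "s = real (size (filter_mset P A))"
    and "b = real (size (filter_mset (\<lambda>x. \<not> P x) A))"
  have step: "perm_prob (A - {#x#}) (\<lambda>ys. find P (x # ys) = Some y) =
      (if x = y then 1 else 0) + (if \<not> P x then d / s else 0)" if "x \<in># A" for x
  proof (cases "P x")
    case True
    then show ?thesis by (cases "x = y") simp_all
  next
    case False
    then have "x \<noteq> y" using assms by auto
    with False show ?thesis using remove.IH[OF that] by (simp add: d_def s_def)
  qed
  have "real (size A) = s + b"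
    unfolding s_def b_def of_nat_add[symmetric] size_union[symmetric] multiset_partition[symmetric] ..
  have "perm_prob A (\<lambda>xs. find P xs = Some y) =
      (\<Sum>x\<in>#A. (if x = y then 1 else 0) + (if \<not> P x then d / s else 0)) / real (size A)"
    by (subst perm_prob_Cons[OF remove.hyps]) (simp only: step cong: image_mset_cong)
  also have "\<dots> = (d + b * (d / s)) / (s + b)"
    unfolding sum_mset.distrib sum_mset_delta sum_mset_if_const \<open>real (size A) = s + b\<close>
    by (simp add: d_def b_def)
  also have "\<dots> = d / s"
  proof (cases "s = 0")
    case True
    then have "filter_mset P A = {#}"
      by (simp add: s_def)
    then have "d = 0"
      using assms by (auto simp: d_def count_eq_zero_iff)
    then show ?thesis by simp
  next
    case False
    moreover have "s + b \<noteq> 0"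
      using False unfolding s_def b_def by linarith
    moreover have "d + b * (d / s) = d * (s + b) / s"
      using False by (simp add: field_simps)
    ultimately show ?thesis by simp
  qed
  finally show ?case unfolding d_def s_def .
qed

lemma ffall_0 [simp]: "ffall b 0 = 1"
  by (simp add: ffall_def)

lemma ffall_Suc: "ffall b (Suc m) = b * ffall (b - 1) m"
  unfolding ffall_def prod.lessThan_Suc_shift by simp

text \<open>For \<open>l > M\<close> the truncated difference \<open>Suc M - l\<close> is not \<open>Suc (M - l)\<close>, but then the
  binomial factor vanishes.\<close>

lemma binomial_mult_ffall_Suc_diff:
  "(M choose l) * ffall b (Suc M - l) = (M choose l) * (b * ffall (b - 1) (M - l))"
  by (cases "l \<le> M") (simp_all add: Suc_diff_le ffall_Suc binomial_eq_0)

text \<open>Hypergeometric: the probability that \<open>M\<close> draws without replacement from an urn of \<open>N\<close>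
  balls, \<open>a\<close> of them marked and \<open>b\<close> of them low, give exactly \<open>l\<close> marked and \<open>M - l\<close> low balls.\<close>

definition draw_prob :: "nat \<Rightarrow> nat \<Rightarrow> nat \<Rightarrow> nat \<Rightarrow> nat \<Rightarrow> real" where
  "draw_prob a b N M l =
     real (M choose l) * real (ffall a l) * real (ffall b (M - l)) / real (ffall N M)"

lemma draw_prob_0 [simp]: "draw_prob a b N 0 l = of_bool (l = 0)"
  by (simp add: draw_prob_def)

lemma draw_prob_Suc:
  "draw_prob a b N (Suc M) l =
     real b / real N * draw_prob a (b - 1) (N - 1) M l
     + real a / real N * (if l \<ge> 1 then draw_prob (a - 1) b (N - 1) M (l - 1) else 0)"
proof (cases l)
  case 0
  then show ?thesis by (simp add: draw_prob_def ffall_Suc)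
next
  case (Suc l')
  have "(Suc M choose l) * ffall a l * ffall b (Suc M - l)
      = (M choose l) * ffall b (Suc M - l) * ffall a l
        + (M choose l') * ffall a (Suc l') * ffall b (M - l')"
    by (simp add: Suc algebra_simps)
  also have "\<dots> = b * ((M choose l) * ffall a l * ffall (b - 1) (M - l))
        + a * ((M choose l') * ffall (a - 1) l' * ffall b (M - l'))"
    by (simp add: binomial_mult_ffall_Suc_diff ffall_Suc)
  finally have "real ((Suc M choose l) * ffall a l * ffall b (Suc M - l))
      = real b * real ((M choose l) * ffall a l * ffall (b - 1) (M - l))
        + real a * real ((M choose l') * ffall (a - 1) l' * ffall b (M - l'))"
    by (metis of_nat_add of_nat_mult)
  then show ?thesis
    by (simp add: Suc draw_prob_def ffall_Suc add_divide_distrib)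
qed

definition prefix_draw_event ::
    "('a \<Rightarrow> bool) \<Rightarrow> 'a \<Rightarrow> nat \<Rightarrow> nat \<Rightarrow> ('a list \<Rightarrow> bool) \<Rightarrow> 'a list \<Rightarrow> bool" where
  "prefix_draw_event L j M l Q xs \<longleftrightarrow>
     count (mset (take M xs)) j = l \<and> (\<forall>x\<in>set (take M xs). x = j \<or> L x) \<and> Q (drop M xs)"

lemma prefix_draw_event_0 [simp]: "prefix_draw_event L j 0 l Q xs \<longleftrightarrow> l = 0 \<and> Q xs"
  by (auto simp: prefix_draw_event_def)

lemma prefix_draw_event_Cons [simp]:
  "prefix_draw_event L j (Suc M) l Q (x # xs) \<longleftrightarrow>
     (if x = j then l \<ge> 1 \<and> prefix_draw_event L j M (l - 1) Q xs
      else L x \<and> prefix_draw_event L j M l Q xs)"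
  by (auto simp: prefix_draw_event_def)

lemma perm_prob_Cons_classes:
  assumes "A \<noteq> {#}" "\<not> L j"
    and "\<And>x. x \<in># A \<Longrightarrow> L x \<Longrightarrow> perm_prob (A - {#x#}) (\<lambda>ys. P (x # ys)) = u"
    and "j \<in># A \<Longrightarrow> perm_prob (A - {#j#}) (\<lambda>ys. P (j # ys)) = v"
    and "\<And>x ys. x \<noteq> j \<Longrightarrow> \<not> L x \<Longrightarrow> \<not> P (x # ys)"
  shows "perm_prob A P = (real (size (filter_mset L A)) * u + real (count A j) * v) / real (size A)"
proof -
  have "perm_prob (A - {#x#}) (\<lambda>ys. P (x # ys)) =
      (if L x then u else 0) + (if x = j then v else 0)" if "x \<in># A" for x
    using assms(2-5) that by (cases "L x"; cases "x = j") simp_all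
  then show ?thesis
    by (subst perm_prob_Cons[OF assms(1)])
      (simp add: sum_mset.distrib sum_mset_if_const flip: count_conv_size_mset cong: image_mset_cong)
qed

text \<open>The hypothesis says that the suffix event has the same probability \<open>c\<close> whichever
  prefix multiset \<open>B\<close> was drawn; this makes prefix and suffix independent.\<close>

lemma perm_prob_prefix_draw_event:
  assumes "\<not> L j" and "M \<le> size A"
    and "\<And>B. B \<subseteq># A \<Longrightarrow> size B = M \<Longrightarrow> count B j = l \<Longrightarrow> \<forall>x\<in>#B. x = j \<or> L x \<Longrightarrow>
           perm_prob (A - B) Q = c"
  shows "perm_prob A (prefix_draw_event L j M l Q) =
           draw_prob (count A j) (size (filter_mset L A)) (size A) M l * c"
  using assms(2,3)
proof (induction M arbitrary: A l)
  case 0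
  then show ?case by (cases l) (auto simp: prefix_draw_event_def)
next
  case (Suc M)
  define a b N where "a = count A j" and "b = size (filter_mset L A)" and "N = size A"
  have A: "A \<noteq> {#}" using Suc.prems(1) by auto
  have low: "perm_prob (A - {#x#}) (\<lambda>ys. prefix_draw_event L j (Suc M) l Q (x # ys)) =
      draw_prob a (b - 1) (N - 1) M l * c" if "x \<in># A" "L x" for x
  proof -
    have "x \<noteq> j" using that assms(1) by auto
    have "perm_prob (A - {#x#} - B) Q = c"
      if "B \<subseteq># A - {#x#}" "size B = M" "count B j = l" "\<forall>y\<in>#B. y = j \<or> L y" for B
      using Suc.prems(2)[of "add_mset x B"] that \<open>x \<in># A\<close> \<open>L x\<close> \<open>x \<noteq> j\<close>
      by (auto simp: insert_subset_eq_iff)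
    then show ?thesis
      using Suc.IH[of "A - {#x#}" l] Suc.prems(1) that \<open>x \<noteq> j\<close>
      by (simp add: a_def b_def N_def size_Diff_singleton)
  qed
  have marked: "perm_prob (A - {#j#}) (\<lambda>ys. prefix_draw_event L j (Suc M) l Q (j # ys)) =
      (if l \<ge> 1 then draw_prob (a - 1) b (N - 1) M (l - 1) * c else 0)" if "j \<in># A"
  proof (cases "l \<ge> 1")
    case True
    have "perm_prob (A - {#j#} - B) Q = c"
      if "B \<subseteq># A - {#j#}" "size B = M" "count B j = l - 1" "\<forall>y\<in>#B. y = j \<or> L y" for B
      using Suc.prems(2)[of "add_mset j B"] that \<open>j \<in># A\<close> True
      by (auto simp: insert_subset_eq_iff)
    then show ?thesis
      using Suc.IH[of "A - {#j#}" "l - 1"] Suc.prems(1) that assms(1) True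
      by (simp add: a_def b_def N_def size_Diff_singleton)
  qed simp
  have "perm_prob A (prefix_draw_event L j (Suc M) l Q) =
      (real b * (draw_prob a (b - 1) (N - 1) M l * c)
       + real a * (if l \<ge> 1 then draw_prob (a - 1) b (N - 1) M (l - 1) * c else 0)) / real N"
    unfolding a_def b_def N_def
    by (rule perm_prob_Cons_classes[where L = L and j = j, OF A assms(1)])
      (use low marked in \<open>simp_all add: a_def b_def N_def\<close>)
  also have "\<dots> = draw_prob a b N (Suc M) l * c"
    by (simp add: draw_prob_Suc algebra_simps add_divide_distrib)
  finally show ?case unfolding a_def b_def N_def .
qed

lemma count_rank_mset: "count (rank_mset n k) r = (if r \<in> {1..n} then k else 0)"
  unfolding rank_mset_def count_sum by (simp add: sum.delta)

lemma set_mset_rank_mset: "k \<ge> 1 \<Longrightarrow> set_mset (rank_mset n k) = {1..n}"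
  unfolding rank_mset_def by (auto simp: set_mset_sum)

lemma size_rank_mset: "size (rank_mset n k) = k * n"
  unfolding rank_mset_def by simp

lemma size_filter_rank_mset:
  assumes "k \<ge> 1"
  shows "size (filter_mset P (rank_mset n k)) = k * card {r \<in> {1..n}. P r}"
proof -
  have "real (size (filter_mset P (rank_mset n k))) = (\<Sum>r\<in>{1..n}. real k * (if P r then 1 else 0))"
    using sum_mset_if_const[of P "1::real" "rank_mset n k"]
    by (simp add: sum_mset_eq_sum_count set_mset_rank_mset[OF assms] count_rank_mset cong: if_cong)
  also have "\<dots> = real (k * card {r \<in> {1..n}. P r})"
    by (simp add: sum.If_cases Int_def flip: sum_distrib_left)
  finally show ?thesis by linarith
qed

definition top_rank_prob :: "nat \<Rightarrow> nat \<Rightarrow> nat \<Rightarrow> nat \<Rightarrow> real" where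
  "top_rank_prob n k j l = real (k - (if j = n then l else 0)) / real (k * (n - j + 1) - l)"

lemma perm_prob_find_top_rank:
  assumes "k \<ge> 1" "j \<in> {1..n}" "B \<subseteq># rank_mset n k" "count B j = l" "\<forall>x\<in>#B. x = j \<or> x < j"
  shows "perm_prob (rank_mset n k - B) (\<lambda>ys. find (\<lambda>x. j \<le> x) ys = Some n) =
           top_rank_prob n k j l"
proof -
  define A where "A = rank_mset n k"
  have "count B n = (if j = n then l else 0)"
    using assms(2,4,5) by (cases "j = n") (auto simp: count_eq_zero_iff)
  then have count_n: "count (A - B) n = k - (if j = n then l else 0)"
    using assms(2) by (simp add: A_def count_rank_mset)
  have "filter_mset (\<lambda>x. j \<le> x) B = filter_mset (\<lambda>x. x = j) B"
    using assms(5) by (intro filter_mset_cong) auto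
  then have "size (filter_mset (\<lambda>x. j \<le> x) B) = l"
    using assms(4) by (simp flip: count_conv_size_mset)
  moreover have "{r \<in> {1..n}. j \<le> r} = {j..n}"
    using assms(2) by auto
  ultimately have size_ge: "size (filter_mset (\<lambda>x. j \<le> x) (A - B)) = k * (n - j + 1) - l"
    using assms(1,2,3)
    by (simp add: A_def size_Diff_submset multiset_filter_mono size_filter_rank_mset Suc_diff_le)
  have "perm_prob (A - B) (\<lambda>ys. find (\<lambda>x. j \<le> x) ys = Some n) =
      real (count (A - B) n) / real (size (filter_mset (\<lambda>x. j \<le> x) (A - B)))"
    using assms(2) by (intro perm_prob_find_eq_Some) simp
  then show ?thesis
    using count_n size_ge by (simp add: A_def top_rank_prob_def)
qed

abbreviation success_with_prefix_max :: "nat \<Rightarrow> nat \<Rightarrow> nat \<Rightarrow> nat \<Rightarrow> nat list \<Rightarrow> bool" where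
  "success_with_prefix_max n M j l \<equiv>
     prefix_draw_event (\<lambda>x. x < j) j M l (\<lambda>ys. find (\<lambda>x. j \<le> x) ys = Some n)"

lemma strategy_succeeds_iff:
  "strategy_succeeds n M xs \<longleftrightarrow> find (\<lambda>x. Max (set (take M xs)) \<le> x) (drop M xs) = Some n"
  by (simp add: strategy_succeeds_def split: option.split)

text \<open>Exactly one pair \<open>(j, l)\<close> fits a given arrangement: the prefix maximum and its
  multiplicity.\<close>

lemma of_bool_strategy_succeeds:
  assumes xs: "xs \<in> arrangements n k" and "k \<ge> 1" "1 \<le> M" "M \<le> k * n"
  shows "of_bool (strategy_succeeds n M xs) = (\<Sum>(j, l)\<in>{1..n} \<times> {1..k}.
           of_bool (success_with_prefix_max n M j l xs) :: real)"
proof -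
  define T where "T = take M xs"
  define j0 where "j0 = Max (set T)"
  define l0 where "l0 = count (mset T) j0"
  have mset_xs: "mset xs = rank_mset n k"
    using xs unfolding arrangements_def by (rule permutations_of_multisetD)
  then have "length xs = k * n"
    by (metis size_mset size_rank_mset)
  then have "set T \<noteq> {}"
    using assms(3,4) by (auto simp: T_def)
  then have "j0 \<in> set T"
    by (simp add: j0_def)
  moreover have "set xs = {1..n}"
    using arg_cong[OF mset_xs, of set_mset] set_mset_rank_mset[OF assms(2)] by simp
  then have "set T \<subseteq> {1..n}"
    unfolding T_def using set_take_subset[of M xs] by simp
  moreover have "mset xs = mset T + mset (drop M xs)"
    unfolding T_def by (simp flip: mset_append)
  then have "count (mset T) j0 \<le> count (mset xs) j0"
    by simp
  ultimately have j0l0: "(j0, l0) \<in> {1..n} \<times> {1..k}"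
    using mset_xs by (auto simp: l0_def count_rank_mset Suc_le_eq)
  have event: "success_with_prefix_max n M j l xs \<longleftrightarrow>
      (j, l) = (j0, l0) \<and> strategy_succeeds n M xs" if "l \<ge> 1" for j l
  proof
    assume event: "success_with_prefix_max n M j l xs"
    then have "count (mset T) j = l" and below: "\<forall>x\<in>set T. x \<le> j"
      by (auto simp: prefix_draw_event_def T_def)
    with that have "j \<in> set T"
      by (metis count_eq_zero_iff not_one_le_zero set_mset_mset)
    with below have "j = j0"
      unfolding j0_def by (intro Max_eqI[symmetric]) auto
    with event show "(j, l) = (j0, l0) \<and> strategy_succeeds n M xs"
      by (simp add: prefix_draw_event_def strategy_succeeds_iff l0_def j0_def T_def)
  next
    assume "(j, l) = (j0, l0) \<and> strategy_succeeds n M xs"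
    moreover have "\<forall>x\<in>set T. x = j0 \<or> x < j0"
      unfolding j0_def using Max_ge[OF finite_set, of _ T] by (auto simp: order.order_iff_strict)
    ultimately show "success_with_prefix_max n M j l xs"
      by (simp add: prefix_draw_event_def strategy_succeeds_iff l0_def j0_def T_def)
  qed
  have "(\<Sum>(j, l)\<in>{1..n} \<times> {1..k}. of_bool (success_with_prefix_max n M j l xs) :: real) =
      (\<Sum>p\<in>{1..n} \<times> {1..k}. if p = (j0, l0) then of_bool (strategy_succeeds n M xs) else 0)"
    by (intro sum.cong) (auto simp: event)
  also have "\<dots> = of_bool (strategy_succeeds n M xs)"
    using j0l0 by simp
  finally show ?thesis ..
qed

lemma perm_prob_max_prefix_top_rank:
  assumes "k \<ge> 1" "j \<in> {1..n}" "M \<le> k * n"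
  shows "perm_prob (rank_mset n k) (success_with_prefix_max n M j l) =
         draw_prob k (k * (j - 1)) (k * n) M l * top_rank_prob n k j l"
proof -
  have "{r \<in> {1..n}. r < j} = {1..<j}"
    using assms(2) by auto
  then have "size (filter_mset (\<lambda>x. x < j) (rank_mset n k)) = k * (j - 1)"
    using assms(1) by (simp add: size_filter_rank_mset)
  then show ?thesis
    using assms perm_prob_find_top_rank[OF assms(1,2)]
    by (subst perm_prob_prefix_draw_event) (auto simp: count_rank_mset size_rank_mset)
qed

lemma success_prob_eq_sum_draw_prob:
  assumes "k \<ge> 1" "1 \<le> M" "M \<le> k * n"
  shows "success_prob n k M = (\<Sum>j=1..n. \<Sum>l=1..k.
           draw_prob k (k * (j - 1)) (k * n) M l * top_rank_prob n k j l)"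
proof -
  have "success_prob n k M = perm_prob (rank_mset n k) (strategy_succeeds n M)"
    by (simp add: success_prob_def arrangements_def perm_prob_def)
  also have "\<dots> = (\<Sum>(j, l)\<in>{1..n} \<times> {1..k}. perm_prob (rank_mset n k)
      (success_with_prefix_max n M j l))"
    using of_bool_strategy_succeeds[OF _ assms] unfolding arrangements_def
    by (subst perm_prob_partition[where I = "{1..n} \<times> {1..k}"]) (auto simp: case_prod_beta)
  also have "\<dots> = (\<Sum>j=1..n. \<Sum>l=1..k. perm_prob (rank_mset n k)
      (success_with_prefix_max n M j l))"
    by (rule sum.cartesian_product[symmetric])
  also have "\<dots> = (\<Sum>j=1..n. \<Sum>l=1..k.
      draw_prob k (k * (j - 1)) (k * n) M l * top_rank_prob n k j l)"
    using assms by (intro sum.cong refl perm_prob_max_prefix_top_rank) auto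
  finally show ?thesis .
qed

lemma success_prob_eq_draw_prob_sums:
  assumes "k \<ge> 1" "n \<ge> 1" "1 \<le> M" "M \<le> k * n"
  shows "success_prob n k M = (\<Sum>l=1..k-1. draw_prob k (k * (n - 1)) (k * n) M l)
    + real k * (\<Sum>j=1..n-1. \<Sum>l=1..k.
        draw_prob k (k * (j - 1)) (k * n) M l * (1 / (real (k * (n - j + 1)) - real l)))"
proof -
  define D where "D j l = draw_prob k (k * (j - 1)) (k * n) M l" for j l
  \<comment> \<open>For \<open>j = n\<close> and \<open>l = k\<close> no item of rank \<open>n\<close> is left: the factor is \<open>0 / 0 = 0\<close>.\<close>
  have top: "(\<Sum>l=1..k. D n l * top_rank_prob n k n l) = (\<Sum>l=1..k-1. D n l)"
  proof -
    obtain k' where k: "k = Suc k'" using assms(1) by (cases k) auto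
    have "top_rank_prob n k n l = 1" if "l \<in> {1..k'}" for l
      using that by (simp add: top_rank_prob_def k)
    then show ?thesis by (simp add: k top_rank_prob_def)
  qed
  have rest: "D j l * top_rank_prob n k j l =
      real k * (D j l * (1 / (real (k * (n - j + 1)) - real l)))"
    if "j \<in> {1..n-1}" "l \<in> {1..k}" for j l
  proof -
    have "j \<noteq> n" and "l \<le> k * (n - j + 1)"
      using that assms(2) by (auto simp: trans_le_add2)
    then show ?thesis by (simp add: top_rank_prob_def of_nat_diff)
  qed
  obtain m where n: "n = Suc m" using assms(2) by (cases n) auto
  have "success_prob n k M = (\<Sum>j=1..n. \<Sum>l=1..k. D j l * top_rank_prob n k j l)"
    using assms by (simp add: success_prob_eq_sum_draw_prob D_def)
  also have "\<dots> = (\<Sum>l=1..k. D n l * top_rank_prob n k n l)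
      + (\<Sum>j=1..n-1. \<Sum>l=1..k. D j l * top_rank_prob n k j l)"
    by (simp add: n)
  also have "\<dots> = (\<Sum>l=1..k-1. D n l)
      + real k * (\<Sum>j=1..n-1. \<Sum>l=1..k. D j l * (1 / (real (k * (n - j + 1)) - real l)))"
    by (simp only: top rest sum_distrib_left cong: sum.cong)
  finally show ?thesis
    unfolding D_def .
qed

theorem proposition1:
  fixes n k M :: nat
  assumes "k \<ge> 2" and "n \<ge> 1" and "1 \<le> M" and "M \<le> k * n - 1"
  shows "success_prob n k M =
    (\<Sum>l=1..k-1. real ((M choose l) * ffall k l * ffall (k*(n-1)) (M-l)) / real (ffall (k*n) M))
    + real k * (\<Sum>j=1..n-1. \<Sum>l=1..k.
        real ((M choose l) * ffall k l * ffall (k*(j-1)) (M-l)) / real (ffall (k*n) M)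
        * (1 / (real (k*(n-j+1)) - real l)))"
proof -
  have draw_prob: "real ((M choose l) * ffall k l * ffall (k * (j - 1)) (M - l))
      / real (ffall (k * n) M) = draw_prob k (k * (j - 1)) (k * n) M l" for j l
    by (simp add: draw_prob_def)
  show ?thesis
    unfolding draw_prob using assms by (intro success_prob_eq_draw_prob_sums) auto
qed

end
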